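(* Consider the adaptive experiment and the ADL-TMLE $\psi(Q_n^* )$ described in the context. Let $\bar g_\infty\in\mathcal G$ be any fixed treatment randomization function and let $Q_\infty=(Q_{\infty,W},Q_{\infty,Y})\in\mathcal Q$ be any fixed element with $Q_{\infty,W}=Q_{0,W}$ and $Q_{\infty,Y}\in\mathcal Q_Y$ (with outcome conditional mean function $\bar Q_\infty$). Then \[ \psi(Q_n^* )-\psi(Q_0)=M_{1,n}(Q_\infty,\bar g_\infty)+M_{2,n}(Q_n^*,Q_\infty,\bar g_n)+M_{3,n}(Q_\infty,\bar g_n,\bar g_\infty), \] where \[ M_{1,n}(Q_\infty,\bar g_\infty):=\frac1n\sum_{i=1}^n\big[D(Q_\infty,\bar g_\infty)(O_i)-P_{Q_0,g_i}D(Q_\infty,\bar g_\infty)\big], \] \[ M_{2,n}(Q_n^*,Q_\infty,\bar g_n):=\frac1n\sum_{i=1}^n\Big\{\big[D(Q_n^*,\bar g_n)(O_i)-P_{Q_0,g_i}D(Q_n^*,\bar g_n)\big]-\big[D(Q_\infty,\bar g_n)(O_i)-P_{Q_0,g_i}D(Q_\infty,\bar g_n)\big]\Big\}, \] \[ M_{3,n}(Q_\infty,\bar g_n,\bar g_\infty):=\frac1n\sum_{i=1}^n\Big\{\big[D(Q_\infty,\bar g_n)(O_i)-P_{Q_0,g_i}D(Q_\infty,\bar g_n)\big]-\big[D(Q_\infty,\bar g_\infty)(O_i)-P_{Q_0,g_i}D(Q_\infty,\bar g_\infty)\big]\Big\}. \]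
   Context: Setting: $\mathcal W$ is a covariate space, $\mathcal A=\{0,1\}$, $\mathcal Y=[0,1]$. $\mathcal Q_W$ is a set of distributions on $\mathcal W$, $\mathcal Q_Y$ a set of conditional distributions of $Y\in\mathcal Y$ given $(A,W)$, and $\mathcal Q=\mathcal Q_W\otimes\mathcal Q_Y$. For $Q=(Q_W,Q_Y)\in\mathcal Q$, $\bar Q(a,w)$ denotes the conditional mean of $Y$ given $A=a,W=w$ under $Q_Y$, and $\psi(Q):=\int[\bar Q(1,w)-\bar Q(0,w)]\,dQ_W(w)$. $\mathcal G$ is a class of treatment randomization functions $g:\mathcal W\times\mathcal A\to[0,1]$, $g(a|w)$ being the probability of $A=a$ given $W=w$. An adaptive experiment enrolls $n$ units sequentially; unit $i$ has data $O_i=(W_i,A_i,Y_i)$, and $\bar O(i)=(O_1,\dots,O_i)$. With true $Q_0=(Q_{0,W},Q_{0,Y})\in\mathcal Q$: $W_i\sim Q_{0,W}$, then $A_i\sim g_i(\cdot|W_i)$ where $g_i\in\mathcal G$ is a known function determined by $\bar O(i-1)$, then $Y_i\sim Q_{0,Y}(\cdot|A_i,W_i)$; i.e. the joint density is $\prod_{i=1}^n q_{0,w}(w_i)g_i(a_i|w_i)q_{0,y}(y_i|a_i,w_i)$. The average design is $\bar g_n:=\frac1n\sum_{i=1}^n g_i$. For $Q\in\mathcal Q$, $g\in\mathcal G$, $P_{Q,g}$ is the law of $(W,A,Y)$ with $W\sim Q_W$, $A|W\sim g(\cdot|W)$, $Y|A,W\sim Q_Y(\cdot|A,W)$, and $P_{Q,g}f=\int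 f\,dP_{Q,g}$ (any data-dependent quantities inside $f$ being held fixed in the integral). For $Q\in\mathcal Q$, $g\in\mathcal G$, define $D(Q,g)(w,a,y)=D_1(\bar Q,g)(w,a,y)+D_2(Q)(w)$ with $D_1(\bar Q,g)(w,a,y)=\frac{2a-1}{g(a|w)}(y-\bar Q(a,w))$ and $D_2(Q)(w)=\bar Q(1,w)-\bar Q(0,w)-\psi(Q)$. ADL-TMLE: given an initial estimate $\bar Q_n$ of $\bar Q_0$, let $H_n(a,w)=(2a-1)/\bar g_n(a|w)$, $\mathrm{logit}\,\bar Q_{n,\epsilon}=\mathrm{logit}\,\bar Q_n+\epsilon H_n$, and $\bar Q_n^*=\bar Q_{n,\epsilon_n}$ with $\epsilon_n$ such that $\frac1n\sum_{i=1}^n\frac{2A_i-1}{\bar g_n(A_i|W_i)}[Y_i-\bar Q_n^*(A_i,W_i)]=0$. Then $Q_n^*=(Q_{n,W},Q_{n,Y}^* )$ where $Q_{n,W}$ is the empirical distribution of $W_1,\dots,W_n$ and $Q^*_{n,Y}$ is an outcome distribution with conditional mean $\bar Q_n^*$, so $\psi(Q_n^* )=\frac1n\sum_{i=1}^n[\bar Q_n^*(1,W_i)-\bar Q_n^*(0,W_i)]$. *)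

theory Defs
  imports "HOL-Probability.Probability"
begin

(* Treatment space A = {0,1} encoded as nat; covariate space is a measurable space MW;
   outcome space is [0,1] inside the reals. *)

definition valid_g :: "'w measure \<Rightarrow> (nat \<Rightarrow> 'w \<Rightarrow> real) \<Rightarrow> bool" where
  "valid_g MW g \<longleftrightarrow>
     (\<forall>a\<in>{0,1}. \<forall>w\<in>space MW. g a w \<in> {0..1}) \<and>
     (\<forall>w\<in>space MW. g 0 w + g 1 w = 1) \<and>
     (\<forall>a\<in>{0,1}. g a \<in> borel_measurable MW)"

(* Q_Y: conditional distribution of Y given (A,W): a probability kernel with values in [0,1] *)
definition valid_QY :: "'w measure \<Rightarrow> (nat \<Rightarrow> 'w \<Rightarrow> real measure) \<Rightarrow> bool" where
  "valid_QY MW QY \<longleftrightarrow>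
     (\<forall>a\<in>{0,1}. QY a \<in> MW \<rightarrow>\<^sub>M prob_algebra borel \<and>
                 (\<forall>w\<in>space MW. AE y in QY a w. y \<in> {0..1}))"

definition Qbar :: "(nat \<Rightarrow> 'w \<Rightarrow> real measure) \<Rightarrow> nat \<Rightarrow> 'w \<Rightarrow> real" where
  "Qbar QY a w = (\<integral>y. y \<partial>(QY a w))"

definition psi :: "'w measure \<Rightarrow> (nat \<Rightarrow> 'w \<Rightarrow> real measure) \<Rightarrow> real" where
  "psi QW QY = (\<integral>w. Qbar QY 1 w - Qbar QY 0 w \<partial>QW)"

definition D1 :: "(nat \<Rightarrow> 'w \<Rightarrow> real measure) \<Rightarrow> (nat \<Rightarrow> 'w \<Rightarrow> real) \<Rightarrow> 'w \<times> nat \<times> real \<Rightarrow> real" where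
  "D1 QY g = (\<lambda>(w,a,y). (2 * real a - 1) / g a w * (y - Qbar QY a w))"

definition D2 :: "'w measure \<Rightarrow> (nat \<Rightarrow> 'w \<Rightarrow> real measure) \<Rightarrow> 'w \<Rightarrow> real" where
  "D2 QW QY = (\<lambda>w. Qbar QY 1 w - Qbar QY 0 w - psi QW QY)"

definition D :: "'w measure \<Rightarrow> (nat \<Rightarrow> 'w \<Rightarrow> real measure) \<Rightarrow> (nat \<Rightarrow> 'w \<Rightarrow> real)
                 \<Rightarrow> 'w \<times> nat \<times> real \<Rightarrow> real" where
  "D QW QY g = (\<lambda>(w,a,y). D1 QY g (w,a,y) + D2 QW QY w)"

(* P_{Q,g} f: expectation of f(W,A,Y) under W ~ QW, A|W ~ g(.|W), Y|A,W ~ QY(.|A,W),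
   written out as the iterated integral of this law *)
definition Pexp :: "'w measure \<Rightarrow> (nat \<Rightarrow> 'w \<Rightarrow> real measure) \<Rightarrow> (nat \<Rightarrow> 'w \<Rightarrow> real)
                    \<Rightarrow> ('w \<times> nat \<times> real \<Rightarrow> real) \<Rightarrow> real" where
  "Pexp QW QY g f = (\<integral>w. (\<Sum>a\<in>{0,1::nat}. g a w * (\<integral>y. f (w,a,y) \<partial>(QY a w))) \<partial>QW)"

definition gbar :: "nat \<Rightarrow> (nat \<Rightarrow> nat \<Rightarrow> 'w \<Rightarrow> real) \<Rightarrow> nat \<Rightarrow> 'w \<Rightarrow> real" where
  "gbar n g = (\<lambda>a w. (1 / real n) * (\<Sum>i=1..n. g i a w))"

definition empW :: "'w measure \<Rightarrow> nat \<Rightarrow> (nat \<Rightarrow> 'w) \<Rightarrow> 'w measure" where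
  "empW MW n W = distr (uniform_count_measure {1..n}) MW W"

definition logit :: "real \<Rightarrow> real" where "logit p = ln (p / (1 - p))"
definition expit :: "real \<Rightarrow> real" where "expit x = exp x / (1 + exp x)"

definition Hn :: "nat \<Rightarrow> (nat \<Rightarrow> nat \<Rightarrow> 'w \<Rightarrow> real) \<Rightarrow> nat \<Rightarrow> 'w \<Rightarrow> real" where
  "Hn n g a w = (2 * real a - 1) / gbar n g a w"

definition Qfluct :: "(nat \<Rightarrow> 'w \<Rightarrow> real) \<Rightarrow> nat \<Rightarrow> (nat \<Rightarrow> nat \<Rightarrow> 'w \<Rightarrow> real) \<Rightarrow> real
                      \<Rightarrow> nat \<Rightarrow> 'w \<Rightarrow> real" where
  "Qfluct Qn n g eps a w = expit (logit (Qn a w) + eps * Hn n g a w)"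

end

theory Submission
  imports Defs
begin

text \<open>The three martingale terms telescope to
  \<open>n\<^sup>-\<^sup>1 \<Sum>\<^sub>i [D(Q\<^sub>n\<^sup>*, g\<^sub>n)(O\<^sub>i) - P\<^sub>Q\<^sub>0\<^sub>,\<^sub>g\<^sub>i D(Q\<^sub>n\<^sup>*, g\<^sub>n)]\<close>
  with \<open>g\<^sub>n\<close> the average design.
  The empirical mean of \<open>D(Q\<^sub>n\<^sup>*, g\<^sub>n)\<close> vanishes: its inverse-weighted residual part
  is the score equation solved by the targeting step, and its centred part has empirical mean
  zero because \<open>Q\<^sub>n\<^sub>,\<^sub>W\<close> is the empirical distribution. Since \<open>P\<^sub>Q\<^sub>,\<^sub>g\<close> is linear
  in \<open>g\<close>, averaging over the designs gives \<open>P\<^sub>Q\<^sub>0\<^sub>,\<^sub>g\<^sub>n D(Q\<^sub>n\<^sup>*, g\<^sub>n)\<close>, which equals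
  \<open>\<psi>(Q\<^sub>0) - \<psi>(Q\<^sub>n\<^sup>*)\<close> because the inverse weights cancel the design.\<close>

lemma valid_QYD:
  assumes "valid_QY MW QY" "a \<in> {0,1}" "w \<in> space MW"
  shows "prob_space (QY a w)" and "integrable (QY a w) (\<lambda>y. y)"
    and "Qbar QY a w \<in> {0..1}"
proof -
  have kernel: "QY a \<in> MW \<rightarrow>\<^sub>M prob_algebra borel" and ae: "AE y in QY a w. y \<in> {0..1}"
    using assms unfolding valid_QY_def by auto
  have "QY a w \<in> space (prob_algebra borel)"
    using kernel assms(3) by (rule measurable_space)
  then have ps: "prob_space (QY a w)" and sets_eq: "sets (QY a w) = sets borel"
    by (auto simp: space_prob_algebra)
  show "prob_space (QY a w)" by (rule ps)
  interpret prob_space "QY a w" by (rule ps)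
  show int: "integrable (QY a w) (\<lambda>y. y)"
    by (rule integrable_const_bound[where B=1])
      (use ae in \<open>auto simp: measurable_cong_sets[OF sets_eq refl]\<close>)
  have "0 \<le> Qbar QY a w" unfolding Qbar_def
    by (rule integral_nonneg_AE) (use ae in auto)
  moreover have "Qbar QY a w \<le> (\<integral>y. 1 \<partial>(QY a w))" unfolding Qbar_def
    by (rule integral_mono_AE) (use ae int in auto)
  ultimately show "Qbar QY a w \<in> {0..1}" by (simp add: prob_space)
qed

lemma borel_measurable_Qbar:
  assumes "valid_QY MW QY" "a \<in> {0,1}"
  shows "Qbar QY a \<in> borel_measurable MW"
proof -
  have "QY a \<in> MW \<rightarrow>\<^sub>M subprob_algebra borel"
    using assms unfolding valid_QY_def by (auto intro: measurable_prob_algebraD)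
  moreover have "(\<lambda>M. \<integral>y. y \<partial>M) \<in> subprob_algebra borel \<rightarrow>\<^sub>M (borel :: real measure)"
    by (rule integral_measurable_subprob_algebra) simp
  ultimately show ?thesis
    unfolding Qbar_def[abs_def] by (rule measurable_compose)
qed

lemma valid_g_gbar:
  assumes "n \<ge> 1" "\<forall>i\<in>{1..n}. valid_g MW (g i)"
  shows "valid_g MW (gbar n g)"
proof -
  have sum_eq_1: "gbar n g 0 w + gbar n g 1 w = 1" if "w \<in> space MW" for w
  proof -
    have "(\<Sum>i=1..n. g i 0 w) + (\<Sum>i=1..n. g i 1 w) = (\<Sum>i=1..n. 1)"
      unfolding sum.distrib[symmetric]
      by (rule sum.cong) (use assms(2) that in \<open>auto simp: valid_g_def\<close>)
    then show ?thesis using assms(1) by (simp add: gbar_def field_simps)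
  qed
  have "gbar n g a w \<in> {0..1}" if "a \<in> {0,1}" "w \<in> space MW" for a w
  proof -
    have "0 \<le> gbar n g b w" if "b \<in> {0,1}" for b
      unfolding gbar_def
      by (intro mult_nonneg_nonneg sum_nonneg) (use assms(2) that \<open>w \<in> space MW\<close> in \<open>auto simp: valid_g_def\<close>)
    then have "0 \<le> gbar n g 0 w" "0 \<le> gbar n g 1 w" by auto
    then show ?thesis using sum_eq_1[OF that(2)] that(1) by auto
  qed
  moreover have "gbar n g a \<in> borel_measurable MW" if "a \<in> {0,1}" for a
  proof -
    have "(\<lambda>w. \<Sum>i=1..n. g i a w) \<in> borel_measurable MW"
      by (rule borel_measurable_sum) (use assms(2) that in \<open>auto simp: valid_g_def\<close>)
    then show ?thesis unfolding gbar_def by simp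
  qed
  ultimately show ?thesis using sum_eq_1 by (simp add: valid_g_def)
qed

lemma design_le_n_gbar:
  assumes "\<forall>j\<in>{1..n}. valid_g MW (g j)" "i \<in> {1..n}" "a \<in> {0,1}" "w \<in> space MW"
  shows "g i a w \<le> real n * gbar n g a w"
proof -
  have "g i a w \<le> (\<Sum>j=1..n. g j a w)"
    by (rule member_le_sum) (use assms in \<open>auto simp: valid_g_def\<close>)
  then show ?thesis using assms(2) by (simp add: gbar_def)
qed

lemma integral_empW:
  assumes "\<forall>i\<in>{1..n}. Wd i \<in> space MW" "f \<in> borel_measurable MW"
  shows "(\<integral>w. f w \<partial>empW MW n Wd) = (1 / real n) * (\<Sum>i=1..n. f (Wd i))"
proof -
  have "Wd \<in> uniform_count_measure {1..n} \<rightarrow>\<^sub>M MW"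
    using assms(1)
    by (auto simp: measurable_def space_uniform_count_measure sets_uniform_count_measure)
  then show ?thesis unfolding empW_def
    by (subst integral_distr[OF _ assms(2)]) (simp_all add: integral_uniform_count_measure)
qed

lemma sum_D_empW_eq_0:
  assumes "valid_QY MW QY" "\<forall>i\<in>{1..n}. Wd i \<in> space MW"
    and "(\<Sum>i=1..n. D1 QY g (Wd i, Ad i, Yd i)) = 0"
  shows "(\<Sum>i=1..n. D (empW MW n Wd) QY g (Wd i, Ad i, Yd i)) = 0"
proof -
  have "psi (empW MW n Wd) QY = (1 / real n) * (\<Sum>i=1..n. Qbar QY 1 (Wd i) - Qbar QY 0 (Wd i))"
    unfolding psi_def using assms(1,2)
    by (intro integral_empW borel_measurable_diff) (auto intro: borel_measurable_Qbar)
  then have "(\<Sum>i=1..n. D2 (empW MW n Wd) QY (Wd i)) = 0"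
    by (cases "n = 0") (simp_all add: D2_def sum_subtractf)
  then show ?thesis
    using assms(3) by (simp add: D_def sum.distrib)
qed

lemma integral_D_outcome:
  assumes "prob_space M" "integrable M (\<lambda>y. y)"
  shows "(\<integral>y. D QW QY g (w, a, y) \<partial>M)
           = (2 * real a - 1) / g a w * ((\<integral>y. y \<partial>M) - Qbar QY a w) + D2 QW QY w"
proof -
  interpret prob_space M by fact
  show ?thesis
    using assms(2) by (simp add: D_def D1_def right_diff_distrib prob_space)
qed

lemma Pexp_D:
  assumes "valid_QY MW Q0Y" "sets Q0W = sets MW"
  shows "Pexp Q0W Q0Y g' (D QW QY g)
           = (\<integral>w. (\<Sum>a\<in>{0,1::nat}. g' a w *
                 ((2 * real a - 1) / g a w * (Qbar Q0Y a w - Qbar QY a w) + D2 QW QY w)) \<partial>Q0W)"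
  unfolding Pexp_def
proof (rule Bochner_Integration.integral_cong[OF refl])
  fix w assume "w \<in> space Q0W"
  then have "w \<in> space MW" using sets_eq_imp_space_eq[OF assms(2)] by simp
  then show "(\<Sum>a\<in>{0,1::nat}. g' a w * (\<integral>y. D QW QY g (w, a, y) \<partial>Q0Y a w))
      = (\<Sum>a\<in>{0,1::nat}. g' a w *
           ((2 * real a - 1) / g a w * (Qbar Q0Y a w - Qbar QY a w) + D2 QW QY w))"
    using valid_QYD[OF assms(1)] by (simp add: integral_D_outcome Qbar_def)
qed

lemma integrable_Qbar:
  assumes "prob_space Q0W" "sets Q0W = sets MW" "valid_QY MW QY" "a \<in> {0,1}"
  shows "integrable Q0W (Qbar QY a)"
proof -
  interpret prob_space Q0W by fact
  show ?thesis
    by (rule integrable_const_bound[where B=1])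
      (use assms valid_QYD(3)[OF assms(3,4)] borel_measurable_Qbar[OF assms(3,4)]
        sets_eq_imp_space_eq[OF assms(2)] in \<open>auto simp: measurable_cong_sets[OF assms(2) refl]\<close>)
qed

lemma Pexp_D_same_design:
  assumes "prob_space Q0W" "sets Q0W = sets MW" "valid_QY MW Q0Y" "valid_g MW g"
    and "\<forall>a\<in>{0,1}. \<forall>w\<in>space MW. g a w > 0"
  shows "Pexp Q0W Q0Y g (D QW QY g) = psi Q0W Q0Y - psi QW QY"
proof -
  interpret prob_space Q0W by fact
  have "Pexp Q0W Q0Y g (D QW QY g) = (\<integral>w. Qbar Q0Y 1 w - Qbar Q0Y 0 w - psi QW QY \<partial>Q0W)"
    unfolding Pexp_D[OF assms(3,2)]
  proof (rule Bochner_Integration.integral_cong[OF refl])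
    fix w assume "w \<in> space Q0W"
    then have "w \<in> space MW" using sets_eq_imp_space_eq[OF assms(2)] by simp
    then have nonzero: "g 0 w \<noteq> 0" "g 1 w \<noteq> 0" and total: "g 0 w + g 1 w = 1"
      using assms(4,5) by (auto simp: valid_g_def)
    from nonzero have "(\<Sum>a\<in>{0,1::nat}. g a w *
        ((2 * real a - 1) / g a w * (Qbar Q0Y a w - Qbar QY a w) + D2 QW QY w))
      = (Qbar Q0Y 1 w - Qbar QY 1 w) - (Qbar Q0Y 0 w - Qbar QY 0 w) + (g 0 w + g 1 w) * D2 QW QY w"
      by (simp add: field_simps)
    with total show "(\<Sum>a\<in>{0,1::nat}. g a w *
        ((2 * real a - 1) / g a w * (Qbar Q0Y a w - Qbar QY a w) + D2 QW QY w))
      = Qbar Q0Y 1 w - Qbar Q0Y 0 w - psi QW QY"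
      by (simp add: D2_def)
  qed
  also have "\<dots> = psi Q0W Q0Y - psi QW QY"
    using integrable_Qbar[OF assms(1-3)] by (simp add: psi_def prob_space)
  finally show ?thesis .
qed

lemma sum_Pexp_designs:
  assumes "\<forall>i\<in>{1..n}. integrable QW (\<lambda>w. \<Sum>a\<in>{0,1::nat}. g i a w * (\<integral>y. f (w, a, y) \<partial>QY a w))"
  shows "(\<Sum>i=1..n. Pexp QW QY (g i) f) = real n * Pexp QW QY (gbar n g) f"
proof (cases "n = 0")
  case False
  have "(\<Sum>i=1..n. Pexp QW QY (g i) f)
      = (\<integral>w. (\<Sum>i=1..n. \<Sum>a\<in>{0,1::nat}. g i a w * (\<integral>y. f (w, a, y) \<partial>QY a w)) \<partial>QW)"
    unfolding Pexp_def using assms by (intro Bochner_Integration.integral_sum[symmetric]) auto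
  also have "\<dots> = (\<integral>w. real n * (\<Sum>a\<in>{0,1::nat}. gbar n g a w * (\<integral>y. f (w, a, y) \<partial>QY a w)) \<partial>QW)"
  proof (rule Bochner_Integration.integral_cong[OF refl])
    fix w
    have "(\<Sum>i=1..n. g i a w) = real n * gbar n g a w" for a
      using False by (simp add: gbar_def)
    then show "(\<Sum>i=1..n. \<Sum>a\<in>{0,1::nat}. g i a w * (\<integral>y. f (w, a, y) \<partial>QY a w))
        = real n * (\<Sum>a\<in>{0,1::nat}. gbar n g a w * (\<integral>y. f (w, a, y) \<partial>QY a w))"
      by (simp add: sum.distrib sum_distrib_right[symmetric] distrib_left)
  qed
  finally show ?thesis unfolding Pexp_def by simp
qed simp

lemma integrable_Pexp_D_integrand:
  assumes "prob_space Q0W" "sets Q0W = sets MW" "valid_QY MW Q0Y" "valid_QY MW QY"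
    and "valid_g MW g'" "valid_g MW g" "\<forall>a\<in>{0,1}. \<forall>w\<in>space MW. g a w > 0"
    and "\<forall>a\<in>{0,1}. \<forall>w\<in>space MW. g' a w \<le> C * g a w"
  shows "integrable Q0W (\<lambda>w. \<Sum>a\<in>{0,1::nat}. g' a w * (\<integral>y. D QW QY g (w, a, y) \<partial>Q0Y a w))"
proof -
  interpret prob_space Q0W by fact
  have space_eq: "space Q0W = space MW" by (rule sets_eq_imp_space_eq[OF assms(2)])
  define h where "h a w = (2 * real a - 1) / g a w * (Qbar Q0Y a w - Qbar QY a w) + D2 QW QY w"
    for a w
  define B where "B = C + 1 + \<bar>psi QW QY\<bar>"
  have bound: "\<bar>g' a w * h a w\<bar> \<le> B" if a: "a \<in> {0,1}" and w: "w \<in> space MW" for a w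
  proof -
    have "0 \<le> g' a w" "g' a w \<le> 1" "0 < g a w" "g' a w \<le> C * g a w"
      using assms(5-8) a w by (auto simp: valid_g_def)
    then have ratio: "0 \<le> g' a w / g a w" "g' a w / g a w \<le> C"
      by (simp_all add: divide_le_eq)
    have "\<bar>Qbar Q0Y a w - Qbar QY a w\<bar> \<le> 1"
      using valid_QYD(3)[OF assms(3) a w] valid_QYD(3)[OF assms(4) a w] by auto
    then have weighted: "\<bar>g' a w / g a w * (Qbar Q0Y a w - Qbar QY a w)\<bar> \<le> C * 1"
      unfolding abs_mult using ratio by (intro mult_mono) auto
    have "\<bar>D2 QW QY w\<bar> \<le> 1 + \<bar>psi QW QY\<bar>"
      using valid_QYD(3)[OF assms(4), of 0 w] valid_QYD(3)[OF assms(4), of 1 w] w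
      unfolding D2_def by auto
    then have centred: "\<bar>g' a w * D2 QW QY w\<bar> \<le> 1 * (1 + \<bar>psi QW QY\<bar>)"
      unfolding abs_mult using \<open>0 \<le> g' a w\<close> \<open>g' a w \<le> 1\<close> by (intro mult_mono) auto
    have "\<bar>2 * real a - 1\<bar> = 1" using a by auto
    moreover have "g' a w * h a w = (2 * real a - 1) * (g' a w / g a w * (Qbar Q0Y a w - Qbar QY a w))
        + g' a w * D2 QW QY w"
      using \<open>0 < g a w\<close> by (simp add: h_def field_simps)
    ultimately have "\<bar>g' a w * h a w\<bar>
        \<le> \<bar>g' a w / g a w * (Qbar Q0Y a w - Qbar QY a w)\<bar> + \<bar>g' a w * D2 QW QY w\<bar>"
      by (metis abs_mult abs_triangle_ineq mult_1)
    with weighted centred show ?thesis unfolding B_def mult_1 mult_1_right by linarith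
  qed
  have [measurable]: "g' a \<in> borel_measurable MW" "g a \<in> borel_measurable MW"
    "Qbar Q0Y a \<in> borel_measurable MW" "Qbar QY a \<in> borel_measurable MW" if "a \<in> {0,1}" for a
    using assms(3-6) that by (auto simp: valid_g_def intro: borel_measurable_Qbar)
  have "(\<lambda>w. \<Sum>a\<in>{0,1::nat}. g' a w * h a w) \<in> borel_measurable Q0W"
    unfolding measurable_cong_sets[OF assms(2) refl] h_def D2_def by measurable
  moreover have "AE w in Q0W. norm (\<Sum>a\<in>{0,1::nat}. g' a w * h a w) \<le> 2 * B"
    using bound[of 0] bound[of 1]
    by (intro AE_I2) (force simp: space_eq intro: order_trans[OF abs_triangle_ineq])
  ultimately have bounded: "integrable Q0W (\<lambda>w. \<Sum>a\<in>{0,1::nat}. g' a w * h a w)"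
    by (intro integrable_const_bound)
  have inner: "(\<Sum>a\<in>{0,1::nat}. g' a w * (\<integral>y. D QW QY g (w, a, y) \<partial>Q0Y a w))
      = (\<Sum>a\<in>{0,1::nat}. g' a w * h a w)" if "w \<in> space Q0W" for w
    using valid_QYD[OF assms(3)] that by (simp add: space_eq h_def integral_D_outcome Qbar_def)
  show ?thesis
    using bounded by (subst Bochner_Integration.integrable_cong[OF refl]) (simp_all only: inner)
qed

lemma three_term_decomposition:
  fixes x y z :: "nat \<Rightarrow> real"
  shows "c * (\<Sum>i\<in>A. x i) + c * (\<Sum>i\<in>A. y i - z i) + c * (\<Sum>i\<in>A. z i - x i)
           = c * (\<Sum>i\<in>A. y i)"
  by (simp add: sum_subtractf algebra_simps)

theorem theorem2:
  fixes MW :: "'w measure"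
    and Q0W :: "'w measure"
    and Q0Y QinfY QnY :: "nat \<Rightarrow> 'w \<Rightarrow> real measure"
    and g :: "nat \<Rightarrow> nat \<Rightarrow> 'w \<Rightarrow> real"
    and ginf :: "nat \<Rightarrow> 'w \<Rightarrow> real"
    and Wd :: "nat \<Rightarrow> 'w" and Ad :: "nat \<Rightarrow> nat" and Yd :: "nat \<Rightarrow> real"
    and Qn :: "nat \<Rightarrow> 'w \<Rightarrow> real" and eps :: real and n :: nat
  assumes n_pos: "n \<ge> 1"
    and Q0W: "prob_space Q0W" "sets Q0W = sets MW"
    and Q0Y: "valid_QY MW Q0Y"
    and Qinf: "valid_QY MW QinfY"
    and ginf: "valid_g MW ginf"
    and g: "\<forall>i\<in>{1..n}. valid_g MW (g i)"
    and data: "\<forall>i\<in>{1..n}. Wd i \<in> space MW \<and> Ad i \<in> {0,1} \<and> Yd i \<in> {0..1}"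
    and pos: "\<forall>a\<in>{0,1}. \<forall>w\<in>space MW. gbar n g a w > 0"
    and Qn: "\<forall>a\<in>{0,1}. \<forall>w\<in>space MW. Qn a w \<in> {0<..<1}"
    and eps: "(1 / real n) * (\<Sum>i=1..n. (2 * real (Ad i) - 1) / gbar n g (Ad i) (Wd i)
                 * (Yd i - Qfluct Qn n g eps (Ad i) (Wd i))) = 0"
    and QnY: "valid_QY MW QnY"
    and QnY_mean: "\<forall>a\<in>{0,1}. \<forall>w\<in>space MW. Qbar QnY a w = Qfluct Qn n g eps a w"
  shows
    "psi (empW MW n Wd) QnY - psi Q0W Q0Y =
       (1 / real n) * (\<Sum>i=1..n.
          D Q0W QinfY ginf (Wd i, Ad i, Yd i) - Pexp Q0W Q0Y (g i) (D Q0W QinfY ginf))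
     + (1 / real n) * (\<Sum>i=1..n.
          (D (empW MW n Wd) QnY (gbar n g) (Wd i, Ad i, Yd i)
             - Pexp Q0W Q0Y (g i) (D (empW MW n Wd) QnY (gbar n g)))
        - (D Q0W QinfY (gbar n g) (Wd i, Ad i, Yd i)
             - Pexp Q0W Q0Y (g i) (D Q0W QinfY (gbar n g))))
     + (1 / real n) * (\<Sum>i=1..n.
          (D Q0W QinfY (gbar n g) (Wd i, Ad i, Yd i)
             - Pexp Q0W Q0Y (g i) (D Q0W QinfY (gbar n g)))
        - (D Q0W QinfY ginf (Wd i, Ad i, Yd i)
             - Pexp Q0W Q0Y (g i) (D Q0W QinfY ginf)))"
proof -
  let ?D = "D (empW MW n Wd) QnY (gbar n g)"
  have valid_gbar: "valid_g MW (gbar n g)"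
    using n_pos g by (rule valid_g_gbar)
  have "(\<Sum>i=1..n. D1 QnY (gbar n g) (Wd i, Ad i, Yd i))
      = (\<Sum>i=1..n. (2 * real (Ad i) - 1) / gbar n g (Ad i) (Wd i)
           * (Yd i - Qfluct Qn n g eps (Ad i) (Wd i)))"
    using data QnY_mean by (intro sum.cong) (force simp: D1_def)+
  also have "\<dots> = 0"
    using eps n_pos by simp
  finally have empirical_mean: "(\<Sum>i=1..n. ?D (Wd i, Ad i, Yd i)) = 0"
    using QnY data by (intro sum_D_empW_eq_0) auto
  have "(\<Sum>i=1..n. Pexp Q0W Q0Y (g i) ?D) = real n * Pexp Q0W Q0Y (gbar n g) ?D"
    using integrable_Pexp_D_integrand[OF Q0W Q0Y QnY _ valid_gbar pos]
      design_le_n_gbar[OF g] g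
    by (intro sum_Pexp_designs) blast
  also have "\<dots> = real n * (psi Q0W Q0Y - psi (empW MW n Wd) QnY)"
    using Pexp_D_same_design[OF Q0W Q0Y valid_gbar pos] by simp
  finally show ?thesis
    unfolding three_term_decomposition using empirical_mean n_pos
    by (simp add: sum_subtractf field_simps)
qed

end
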